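(* Let $m,n\ge2$ be integers and let $H$ be the graph on the vertex set $\{x_{i,j}: i\in[m], j\in[n]\}$ with edge set $\{\{x_{i,j},x_{i',j+1}\}: 1\le i<i'\le m,\ 1\le j\le n-1\}$. Then $\operatorname{cochord}(H)\le n-1$.
   Context: A graph is co-chordal if its complement is chordal (every induced cycle has length 3). The co-chordal cover number $\operatorname{cochord}(G)$ is the minimum $k$ such that there are co-chordal subgraphs $G_1,\dots,G_k$ of $G$ with $E(G)=\bigcup_i E(G_i)$. *)

theory Defs
  imports Main
begin

definition simple_graph :: "'a set \<Rightarrow> 'a set set \<Rightarrow> bool" where
  "simple_graph V E \<longleftrightarrow> (\<forall>e\<in>E. \<exists>u v. u \<in> V \<and> v \<in> V \<and> u \<noteq> v \<and> e = {u, v})"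

definition complement_edges :: "'a set \<Rightarrow> 'a set set \<Rightarrow> 'a set set" where
  "complement_edges V E = {{u, v} | u v. u \<in> V \<and> v \<in> V \<and> u \<noteq> v \<and> {u, v} \<notin> E}"

definition induced_cycle :: "'a set \<Rightarrow> 'a set set \<Rightarrow> 'a list \<Rightarrow> bool" where
  "induced_cycle V E cs \<longleftrightarrow>
     length cs \<ge> 3 \<and> distinct cs \<and> set cs \<subseteq> V \<and>
     (\<forall>i < length cs. \<forall>j < length cs.
        ({cs ! i, cs ! j} \<in> E \<longleftrightarrow>
          (j = (i + 1) mod length cs \<or> i = (j + 1) mod length cs)))"

definition chordal :: "'a set \<Rightarrow> 'a set set \<Rightarrow> bool" where
  "chordal V E \<longleftrightarrow> (\<forall>cs. induced_cycle V E cs \<longrightarrow> length cs = 3)"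

definition co_chordal :: "'a set \<Rightarrow> 'a set set \<Rightarrow> bool" where
  "co_chordal V E \<longleftrightarrow> chordal V (complement_edges V E)"

definition subgraph :: "'a set \<Rightarrow> 'a set set \<Rightarrow> 'a set \<Rightarrow> 'a set set \<Rightarrow> bool" where
  "subgraph V' E' V E \<longleftrightarrow> simple_graph V' E' \<and> V' \<subseteq> V \<and> E' \<subseteq> E"

definition cochord :: "'a set \<Rightarrow> 'a set set \<Rightarrow> nat" where
  "cochord V E = (LEAST k. \<exists>Gs :: ('a set \<times> 'a set set) list.
      length Gs = k \<and>
      (\<forall>G \<in> set Gs. subgraph (fst G) (snd G) V E \<and> co_chordal (fst G) (snd G)) \<and>
      E = (\<Union>G \<in> set Gs. snd G))"

definition H_verts :: "nat \<Rightarrow> nat \<Rightarrow> (nat \<times> nat) set" where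
  "H_verts m n = {1..m} \<times> {1..n}"

definition H_edges :: "nat \<Rightarrow> nat \<Rightarrow> (nat \<times> nat) set set" where
  "H_edges m n = {{(i, j), (i', j + 1)} | i i' j. 1 \<le> i \<and> i < i' \<and> i' \<le> m \<and> 1 \<le> j \<and> j \<le> n - 1}"

end

theory Submission
  imports Defs
begin

text \<open>H is the union of the n - 1 layers spanned by two consecutive columns j and j + 1. Each
  layer is bipartite between its two columns, and the neighbourhoods of the vertices x_{i,j}
  (all x_{i',j+1} with i' > i) form a chain, so the layer has no induced 2K2. Bipartite graphs
  without induced 2K2 are co-chordal.\<close>

lemma cochord_le:
  assumes "\<forall>G \<in> set Gs. subgraph (fst G) (snd G) V E \<and> co_chordal (fst G) (snd G)"
    and "E = (\<Union>G \<in> set Gs. snd G)"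
  shows "cochord V E \<le> length Gs"
  unfolding cochord_def by (intro Least_le) (use assms in blast)

lemma complement_edges_iff:
  assumes "u \<in> V" "v \<in> V" "u \<noteq> v"
  shows "{u, v} \<in> complement_edges V E \<longleftrightarrow> {u, v} \<notin> E"
proof
  assume "{u, v} \<in> complement_edges V E"
  then obtain a b where "{u, v} = {a, b}" "{a, b} \<notin> E"
    unfolding complement_edges_def by blast
  then show "{u, v} \<notin> E" by simp
next
  assume "{u, v} \<notin> E"
  then show "{u, v} \<in> complement_edges V E"
    using assms unfolding complement_edges_def by blast
qed

lemma induced_cycle_complement_non_edge_iff:
  assumes "induced_cycle V (complement_edges V E) cs"
    and "i < length cs" "j < length cs" "i \<noteq> j"
  shows "{cs ! i, cs ! j} \<notin> E \<longleftrightarrow> j = (i + 1) mod length cs \<or> i = (j + 1) mod length cs"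
proof -
  have "cs ! i \<in> V" "cs ! j \<in> V" "cs ! i \<noteq> cs ! j"
    using assms by (auto simp: induced_cycle_def nth_eq_iff_index_eq)
  then have "{cs ! i, cs ! j} \<notin> E \<longleftrightarrow> {cs ! i, cs ! j} \<in> complement_edges V E"
    by (simp add: complement_edges_iff)
  also have "\<dots> \<longleftrightarrow> j = (i + 1) mod length cs \<or> i = (j + 1) mod length cs"
    using assms unfolding induced_cycle_def by blast
  finally show ?thesis .
qed

text \<open>In the complement, the antipodal pairs of an induced 4-cycle would form an induced 2K2,
  and the chords 02, 24, 41, 13, 30 of an induced cycle of length at least 5 would form an odd
  cycle in the graph itself.\<close>

lemma co_chordal_if_bipartite_2K2_free:
  assumes "V \<subseteq> A \<union> B" "A \<inter> B = {}"
    and bipartite: "\<And>e. e \<in> E \<Longrightarrow> \<exists>a\<in>A. \<exists>b\<in>B. e = {a, b}"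
    and no_2K2: "\<And>a a' b b'. {a, b} \<in> E \<Longrightarrow> {a', b'} \<in> E \<Longrightarrow>
      a \<in> A \<Longrightarrow> a' \<in> A \<Longrightarrow> b \<in> B \<Longrightarrow> b' \<in> B \<Longrightarrow> {a, b'} \<in> E \<or> {a', b} \<in> E"
  shows "co_chordal V E"
  unfolding co_chordal_def chordal_def
proof (intro allI impI)
  fix cs assume cyc: "induced_cycle V (complement_edges V E) cs"
  define k where "k = length cs"
  have "k \<ge> 3" using cyc by (simp add: induced_cycle_def k_def)
  have non_edge_iff: "{cs ! i, cs ! j} \<notin> E \<longleftrightarrow> j = (i + 1) mod k \<or> i = (j + 1) mod k"
    if "i < k" "j < k" "i \<noteq> j" for i j
    using induced_cycle_complement_non_edge_iff[OF cyc] that by (simp add: k_def)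
  show "k = 3"
  proof (rule ccontr)
    assume "k \<noteq> 3"
    then consider "k = 4" | "k \<ge> 5" using \<open>k \<ge> 3\<close> by linarith
    then show False
    proof cases
      case 1
      have "{cs ! 0, cs ! 2} \<in> E" "{cs ! 1, cs ! 3} \<in> E"
        and "{cs ! 0, cs ! 1} \<notin> E" "{cs ! 2, cs ! 1} \<notin> E"
        and "{cs ! 2, cs ! 3} \<notin> E" "{cs ! 0, cs ! 3} \<notin> E"
        using non_edge_iff[of 0 2] non_edge_iff[of 1 3] non_edge_iff[of 0 1]
          non_edge_iff[of 2 1] non_edge_iff[of 2 3] non_edge_iff[of 0 3] 1
        by simp_all
      then have non_edge: "{x, y} \<notin> E"
        if "x \<in> {cs ! 0, cs ! 2}" "y \<in> {cs ! 1, cs ! 3}" for x y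
        using that by (auto simp: insert_commute)
      obtain a b where "a \<in> A" "b \<in> B" and ab: "{cs ! 0, cs ! 2} = {a, b}"
        using bipartite \<open>{cs ! 0, cs ! 2} \<in> E\<close> by blast
      obtain a' b' where "a' \<in> A" "b' \<in> B" and ab': "{cs ! 1, cs ! 3} = {a', b'}"
        using bipartite \<open>{cs ! 1, cs ! 3} \<in> E\<close> by blast
      have "{a, b} \<in> E" "{a', b'} \<in> E"
        using \<open>{cs ! 0, cs ! 2} \<in> E\<close> \<open>{cs ! 1, cs ! 3} \<in> E\<close> ab ab' by simp_all
      then have "{a, b'} \<in> E \<or> {a', b} \<in> E"
        using no_2K2 \<open>a \<in> A\<close> \<open>b \<in> B\<close> \<open>a' \<in> A\<close> \<open>b' \<in> B\<close> by blast
      moreover have a: "a \<in> {cs ! 0, cs ! 2}" and b: "b \<in> {cs ! 0, cs ! 2}"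
        and a': "a' \<in> {cs ! 1, cs ! 3}" and b': "b' \<in> {cs ! 1, cs ! 3}"
        unfolding ab ab' by simp_all
      ultimately show False
        using non_edge[OF a b'] non_edge[OF b a'] by (simp add: insert_commute)
    next
      case 2
      have edge_crosses: "x \<in> A \<longleftrightarrow> y \<notin> A" if "{x, y} \<in> E" for x y
        using bipartite[OF that] \<open>A \<inter> B = {}\<close> by (auto simp: doubleton_eq_iff)
      have "{cs ! 0, cs ! 2} \<in> E" "{cs ! 2, cs ! 4} \<in> E" "{cs ! 4, cs ! 1} \<in> E"
        and "{cs ! 1, cs ! 3} \<in> E" "{cs ! 3, cs ! 0} \<in> E"
        using non_edge_iff[of 0 2] non_edge_iff[of 2 4] non_edge_iff[of 4 1]
          non_edge_iff[of 1 3] non_edge_iff[of 3 0] 2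
        by (cases "k = 5"; simp)+
      from this[THEN edge_crosses] show False by blast
    qed
  qed
qed

definition layer_verts :: "nat \<Rightarrow> nat \<Rightarrow> (nat \<times> nat) set" where
  "layer_verts m j = {1..m} \<times> {j, Suc j}"

definition layer_edges :: "nat \<Rightarrow> nat \<Rightarrow> (nat \<times> nat) set set" where
  "layer_edges m j = {{(i, j), (i', Suc j)} | i i'. 1 \<le> i \<and> i < i' \<and> i' \<le> m}"

lemma layer_edge_iff:
  "{(i, j), (i', Suc j)} \<in> layer_edges m j \<longleftrightarrow> 1 \<le> i \<and> i < i' \<and> i' \<le> m"
  unfolding layer_edges_def by (auto simp: doubleton_eq_iff)

lemma co_chordal_layer: "co_chordal (layer_verts m j) (layer_edges m j)"
proof (rule co_chordal_if_bipartite_2K2_free)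
  let ?A = "{1..m} \<times> {j}" and ?B = "{1..m} \<times> {Suc j}"
  show "layer_verts m j \<subseteq> ?A \<union> ?B" "?A \<inter> ?B = {}"
    by (auto simp: layer_verts_def)
  show "\<exists>a\<in>?A. \<exists>b\<in>?B. e = {a, b}" if "e \<in> layer_edges m j" for e
  proof -
    obtain i i' where "e = {(i, j), (i', Suc j)}" "1 \<le> i" "i < i'" "i' \<le> m"
      using \<open>e \<in> layer_edges m j\<close> unfolding layer_edges_def by blast
    then have "(i, j) \<in> ?A" "(i', Suc j) \<in> ?B" "e = {(i, j), (i', Suc j)}" by auto
    then show ?thesis by blast
  qed
  show "{a, b'} \<in> layer_edges m j \<or> {a', b} \<in> layer_edges m j"
    if ab: "{a, b} \<in> layer_edges m j" and a'b': "{a', b'} \<in> layer_edges m j"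
      and "a \<in> ?A" "a' \<in> ?A" "b \<in> ?B" "b' \<in> ?B" for a a' b b'
  proof -
    obtain i i' k k' where "a = (i, j)" "a' = (i', j)" "b = (k, Suc j)" "b' = (k', Suc j)"
      using \<open>a \<in> ?A\<close> \<open>a' \<in> ?A\<close> \<open>b \<in> ?B\<close> \<open>b' \<in> ?B\<close> by blast
    with ab a'b' show ?thesis by (simp add: layer_edge_iff) linarith
  qed
qed

lemma H_edges_eq_Union_layers: "H_edges m n = (\<Union>j\<in>{1..<n}. layer_edges m j)"
proof (intro equalityI subsetI)
  fix e assume "e \<in> H_edges m n"
  then obtain i i' j where "e = {(i, j), (i', Suc j)}"
    and "1 \<le> i" "i < i'" "i' \<le> m" "1 \<le> j" "j < n"
    unfolding H_edges_def by auto
  then show "e \<in> (\<Union>j\<in>{1..<n}. layer_edges m j)"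
    unfolding layer_edges_def by auto
next
  fix e assume "e \<in> (\<Union>j\<in>{1..<n}. layer_edges m j)"
  then obtain i i' j where "e = {(i, j), (i', j + 1)}"
    and "1 \<le> i" "i < i'" "i' \<le> m" "1 \<le> j" "j \<le> n - 1"
    unfolding layer_edges_def by auto
  then show "e \<in> H_edges m n"
    unfolding H_edges_def by blast
qed

lemma layer_subgraph:
  assumes "1 \<le> j" "j < n"
  shows "subgraph (layer_verts m j) (layer_edges m j) (H_verts m n) (H_edges m n)"
  unfolding subgraph_def
proof (intro conjI)
  show "simple_graph (layer_verts m j) (layer_edges m j)"
    unfolding simple_graph_def
  proof
    fix e assume "e \<in> layer_edges m j"
    then obtain i i' where e: "e = {(i, j), (i', Suc j)}" "1 \<le> i" "i < i'" "i' \<le> m"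
      unfolding layer_edges_def by blast
    moreover have "(i, j) \<in> layer_verts m j" "(i', Suc j) \<in> layer_verts m j"
      and "(i, j) \<noteq> (i', Suc j)"
      using e by (auto simp: layer_verts_def)
    ultimately show "\<exists>u v. u \<in> layer_verts m j \<and> v \<in> layer_verts m j \<and> u \<noteq> v \<and> e = {u, v}"
      by blast
  qed
  show "layer_verts m j \<subseteq> H_verts m n"
    using assms unfolding layer_verts_def H_verts_def by auto
  show "layer_edges m j \<subseteq> H_edges m n"
    using assms unfolding H_edges_eq_Union_layers by auto
qed

theorem lemma3p10:
  fixes m n :: nat
  assumes "m \<ge> 2" and "n \<ge> 2"
  shows "cochord (H_verts m n) (H_edges m n) \<le> n - 1"
proof -
  define Gs where "Gs = map (\<lambda>j. (layer_verts m j, layer_edges m j)) [1..<n]"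
  have "cochord (H_verts m n) (H_edges m n) \<le> length Gs"
  proof (rule cochord_le)
    show "\<forall>G \<in> set Gs.
        subgraph (fst G) (snd G) (H_verts m n) (H_edges m n) \<and> co_chordal (fst G) (snd G)"
      using layer_subgraph co_chordal_layer by (auto simp: Gs_def)
    show "H_edges m n = (\<Union>G \<in> set Gs. snd G)"
      using H_edges_eq_Union_layers by (simp add: Gs_def)
  qed
  then show ?thesis by (simp add: Gs_def)
qed

end
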